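(* Let $\alpha>0$, $0<R_1<R_2$, $\lambda_G>0$, and let $g=|h|^2d^{-\alpha}$ where $|h|^2$ is exponential with mean $\lambda_G$ and $d$ is independent of $|h|^2$. Put $b_3=\frac{2}{\alpha}+1$, $b_{1,1}^G=\frac{2\lambda_G^{2/\alpha}}{\alpha R_1^2}$, $b_{1,2}^G=\frac{2\lambda_G^{2/\alpha}}{\alpha(R_2^2-R_1^2)}$, $b_{2,1}^G=\frac{R_1^\alpha}{\lambda_G}$, $b_{2,2}^G=\frac{R_2^\alpha}{\lambda_G}$. (i) If $d$ is the distance to the origin of a point uniformly distributed in the disc of radius $R_1$ centred at the origin, then for $x\ge 0$ the CDF of $g$ is $$F^{near}_{g}(x)=\frac{b_{1,1}^G\left(b_{2,1}^G\right)^{b_3}}{b_3}\,x\,{}_2F_2\!\left(b_3,1;b_3+1,2;-b_{2,1}^Gx\right).$$ (ii) If $d$ is the distance to the origin of a point uniformly distributed in the annulus $R_1\le|z|\le R_2$, then for $x\ge0$ $$F^{far}_{g}(x)=\frac{b_{1,2}^G\left(b_{2,2}^G\right)^{b_3}}{b_3}\,x\,{}_2F_2\!\left(b_3,1;b_3+1,2;-b_{2,2}^Gx\right)-\frac{b_{1,2}^G\left(b_{2,1}^G\right)^{b_3}}{b_3}\,x\,{}_2F_2\!\left(b_3,1;b_3+1,2;-b_{2,1}^Gx\right).$$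
   Context: ${}_pF_q$ denotes the generalized hypergeometric function. The random variable $g$ is the combined channel gain (Rayleigh fading with path loss exponent $\alpha$) of a user located uniformly in a disc (near user) or annulus (far user) around a base station at the origin. *)

theory Defs
  imports "HOL-Probability.Probability"
begin

definition hypergeom :: "real list \<Rightarrow> real list \<Rightarrow> real \<Rightarrow> real" where
  "hypergeom as bs z =
     (\<Sum>k. (prod_list (map (\<lambda>a. pochhammer a k) as) / prod_list (map (\<lambda>b. pochhammer b k) bs))
          * z ^ k / fact k)"

definition gain :: "real \<Rightarrow> ('a \<Rightarrow> real) \<Rightarrow> ('a \<Rightarrow> complex) \<Rightarrow> 'a \<Rightarrow> real" where
  "gain \<alpha> H Z \<omega> = H \<omega> * (cmod (Z \<omega>)) powr (- \<alpha>)"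

text \<open>Standing model: |h|^2 exponential with mean lambda (rate 1/lambda), Z uniform on region A
  of the plane (identified with complex numbers), H and Z independent.\<close>
definition fading_model :: "'a measure \<Rightarrow> real \<Rightarrow> ('a \<Rightarrow> real) \<Rightarrow> ('a \<Rightarrow> complex) \<Rightarrow> complex set \<Rightarrow> bool" where
  "fading_model M lam H Z A \<longleftrightarrow>
     prob_space M \<and>
     distributed M lborel H (exponential_density (1 / lam)) \<and>
     Z \<in> borel_measurable M \<and>
     distr M lborel Z = uniform_measure lborel A \<and>
     prob_space.indep_var M borel H borel Z"

end

theory Submission
  imports Defs
begin

(* Given the fading power h > 0, the gain satisfies g <= x exactly when |z| >= (h/x)^(1/alpha).
   For a point uniform in the disc of radius r this has probability (1 - (h/(x r^alpha))^(2/alpha))^+,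
   and an annulus is the difference of two discs weighted by their areas. Averaging over the
   exponential density of h, expanding the exponential into its power series and integrating
   term by term (dominated convergence) gives a series that is a multiple of
   2F2(b3, 1; b3 + 1, 2; -x r^alpha / lambda). *)

(* For z uniform in the disc of radius r, the probability that h |z|^(-alpha) <= x is
   disc_fraction (2 / alpha) (x r^alpha) h. *)
definition disc_fraction :: "real \<Rightarrow> real \<Rightarrow> real \<Rightarrow> real" where
  "disc_fraction \<beta> c h = (if 0 < h \<and> h \<le> c then 1 - (h / c) powr \<beta> else 0)"

definition disc_fraction_mean :: "real \<Rightarrow> real \<Rightarrow> real \<Rightarrow> real" where
  "disc_fraction_mean \<beta> lam c =
     \<beta> / (\<beta> + 1) * (c / lam) * hypergeom [\<beta> + 1, 1] [\<beta> + 1 + 1, 2] (- (c / lam))"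

lemma hypergeom_2F2_b1_term:
  fixes b z :: real
  assumes b: "b > 0"
  shows "prod_list (map (\<lambda>a. pochhammer a n) [b, 1]) / prod_list (map (\<lambda>a. pochhammer a n) [b + 1, 2])
      * z ^ n / fact n
    = b / (b + n) * z ^ n / fact (Suc n)"
proof -
  have "pochhammer b n * (b + n) = b * pochhammer (b + 1) n"
    using pochhammer_Suc[of b n] pochhammer_rec[of b n] by simp
  moreover have "pochhammer (b + 1) n > 0" "b + n > 0"
    using b by (auto intro: pochhammer_pos)
  ultimately have ratio: "pochhammer b n / pochhammer (b + 1) n = b / (b + n)"
    by (simp add: field_simps)
  have "pochhammer (2::real) n = fact (Suc n)"
    using pochhammer_fact[of "Suc n", where 'a=real] by (simp add: pochhammer_rec)
  then have "prod_list (map (\<lambda>a. pochhammer a n) [b, 1]) / prod_list (map (\<lambda>a. pochhammer a n) [b + 1, 2])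
      * z ^ n / fact n
    = pochhammer b n / pochhammer (b + 1) n * z ^ n / fact (Suc n)"
    by (simp add: pochhammer_fact[symmetric])
  then show ?thesis
    by (simp only: ratio)
qed

lemma hypergeom_2F2_b1_sums:
  fixes b z :: real
  assumes b: "b > 0"
  shows "(\<lambda>n. b / (b + n) * z ^ n / fact (Suc n)) sums hypergeom [b, 1] [b + 1, 2] z"
proof -
  have "summable (\<lambda>n. b / (b + n) * z ^ n / fact (Suc n))"
  proof (rule summable_comparison_test)
    show "summable (\<lambda>n. inverse (fact n) * \<bar>z\<bar> ^ n)"
      by (rule summable_exp)
    have "norm (b / (b + n) * z ^ n / fact (Suc n)) \<le> inverse (fact n) * \<bar>z\<bar> ^ n" for n
    proof -
      have "norm (b / (b + n) * z ^ n / fact (Suc n)) = b / (b + n) * (inverse (fact (Suc n)) * \<bar>z\<bar> ^ n)"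
        using b by (simp add: abs_mult power_abs divide_inverse)
      also have "\<dots> \<le> 1 * (inverse (fact n) * \<bar>z\<bar> ^ n)"
        using b fact_mono[of n "Suc n", where 'a = real]
        by (intro mult_mono mult_right_mono le_imp_inverse_le) auto
      finally show ?thesis
        by simp
    qed
    then show "\<exists>N. \<forall>n\<ge>N. norm (b / (b + n) * z ^ n / fact (Suc n)) \<le> inverse (fact n) * \<bar>z\<bar> ^ n"
      by blast
  qed
  then show ?thesis
    by (simp only: hypergeom_def hypergeom_2F2_b1_term[OF b] summable_sums)
qed

lemma has_integral_powr_diff:
  fixes c \<beta> :: real and n :: nat
  assumes c: "c > 0" and \<beta>: "\<beta> > 0"
  shows "((\<lambda>h. h powr n - h powr (n + \<beta>) / c powr \<beta>)
           has_integral (c ^ (n + 1) / (real n + 1) - c ^ (n + 1) / (real n + 1 + \<beta>))) {0..c}"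
proof -
  have "c powr (real n + 1) = c ^ (n + 1)"
    using powr_realpow[of c "Suc n"] c by (simp add: add.commute)
  moreover have "c powr (real n + \<beta> + 1) = c powr (real n + 1) * c powr \<beta>"
    by (simp add: powr_add[symmetric] add_ac)
  ultimately have "c powr (real n + 1) / (real n + 1) = c ^ (n + 1) / (real n + 1)"
    and "c powr (real n + \<beta> + 1) / (real n + \<beta> + 1) / c powr \<beta> = c ^ (n + 1) / (real n + 1 + \<beta>)"
    using c by (simp_all add: add_ac)
  with has_integral_diff[OF has_integral_powr_from_0[of "real n" c]
      has_integral_divide[OF has_integral_powr_from_0[of "real n + \<beta>" c], of "c powr \<beta>"]]
  show ?thesis
    using c \<beta> by simp
qed

lemma abs_exp_partial_sum_le:
  fixes x :: real
  shows "\<bar>\<Sum>n<k. x ^ n / fact n\<bar> \<le> exp \<bar>x\<bar>"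
proof -
  have "\<bar>\<Sum>n<k. x ^ n / fact n\<bar> \<le> (\<Sum>n<k. \<bar>x\<bar> ^ n / fact n)"
    by (rule order_trans[OF sum_abs]) (simp add: power_abs)
  also have "\<dots> \<le> (\<Sum>n. \<bar>x\<bar> ^ n / fact n)"
    using summable_exp_generic[of "\<bar>x\<bar>"] by (intro sum_le_suminf) (auto simp: divide_inverse mult.commute)
  also have "\<dots> = exp \<bar>x\<bar>"
    by (simp add: exp_def divide_inverse mult.commute)
  finally show ?thesis .
qed

(* The n-th term of the power series of exponential_density (1 / lam) h * disc_fraction beta c h
   on {0..c}; as 0 powr _ = 0, the terms also vanish at h = 0, where disc_fraction does. *)
definition exp_disc_term :: "real \<Rightarrow> real \<Rightarrow> real \<Rightarrow> nat \<Rightarrow> real \<Rightarrow> real" where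
  "exp_disc_term lam \<beta> c n h = 1 / lam * (- 1 / lam) ^ n / fact n * (h powr n - h powr (n + \<beta>) / c powr \<beta>)"

lemma sum_exp_disc_term:
  fixes lam \<beta> c h :: real
  assumes "c > 0" and "h > 0"
  shows "(\<Sum>n<k. exp_disc_term lam \<beta> c n h)
    = 1 / lam * (\<Sum>n<k. (- h / lam) ^ n / fact n) * (1 - (h / c) powr \<beta>)"
proof -
  have "exp_disc_term lam \<beta> c n h = 1 / lam * ((- h / lam) ^ n / fact n) * (1 - (h / c) powr \<beta>)" for n
  proof -
    have "h powr (n + \<beta>) = h ^ n * h powr \<beta>" "h powr n = h ^ n"
        "(h / c) powr \<beta> = h powr \<beta> / c powr \<beta>" "(- 1 / lam) ^ n * h ^ n = (- h / lam) ^ n"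
      using assms by (simp_all add: powr_add powr_realpow powr_divide power_mult_distrib[symmetric])
    then show ?thesis
      by (simp add: exp_disc_term_def field_simps)
  qed
  then show ?thesis
    by (simp add: sum_distrib_left sum_distrib_right)
qed

lemma exp_disc_term_partial_sums:
  fixes lam \<beta> c h :: real
  assumes lam: "lam > 0" and c: "c > 0" and \<beta>: "\<beta> > 0" and h: "h \<in> {0..c}"
  shows "(\<lambda>k. \<Sum>n<k. exp_disc_term lam \<beta> c n h)
      \<longlonglongrightarrow> exponential_density (1 / lam) h * disc_fraction \<beta> c h"
    and "\<bar>\<Sum>n<k. exp_disc_term lam \<beta> c n h\<bar> \<le> exp (c / lam) / lam"
proof -
  consider "h = 0" | "0 < h" "h \<le> c"
    using h by fastforce
  then have "((\<lambda>k. \<Sum>n<k. exp_disc_term lam \<beta> c n h)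
      \<longlonglongrightarrow> exponential_density (1 / lam) h * disc_fraction \<beta> c h)
    \<and> \<bar>\<Sum>n<k. exp_disc_term lam \<beta> c n h\<bar> \<le> exp (c / lam) / lam"
  proof cases
    case 1
    then show ?thesis
      using lam by (simp add: exp_disc_term_def disc_fraction_def)
  next
    case 2
    have "(\<lambda>k. \<Sum>n<k. (- h / lam) ^ n / fact n) \<longlonglongrightarrow> exp (- h / lam)"
      using exp_converges[of "- h / lam"] by (simp add: sums_def divide_inverse mult.commute)
    then have limit: "(\<lambda>k. \<Sum>n<k. exp_disc_term lam \<beta> c n h)
        \<longlonglongrightarrow> 1 / lam * exp (- h / lam) * (1 - (h / c) powr \<beta>)"
      unfolding sum_exp_disc_term[OF c 2(1)] by (rule tendsto_mult[OF tendsto_mult[OF tendsto_const] tendsto_const])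
    have "exp \<bar>- h / lam\<bar> \<le> exp (c / lam)"
      using 2 lam by (simp add: divide_right_mono)
    then have "\<bar>\<Sum>n<k. (- h / lam) ^ n / fact n\<bar> \<le> exp (c / lam)"
      by (rule order_trans[OF abs_exp_partial_sum_le])
    moreover have "0 \<le> (h / c) powr \<beta>" "(h / c) powr \<beta> \<le> 1"
      using 2 c \<beta> by (auto intro: powr_le1)
    ultimately have "\<bar>\<Sum>n<k. (- h / lam) ^ n / fact n\<bar> * \<bar>1 - (h / c) powr \<beta>\<bar> / lam \<le> exp (c / lam) * 1 / lam"
      using lam by (intro divide_right_mono mult_mono) auto
    with limit show ?thesis
      using 2 lam by (simp add: sum_exp_disc_term[OF c 2(1)] abs_mult disc_fraction_def exponential_density_def)
  qed
  then show "(\<lambda>k. \<Sum>n<k. exp_disc_term lam \<beta> c n h)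
      \<longlonglongrightarrow> exponential_density (1 / lam) h * disc_fraction \<beta> c h"
    and "\<bar>\<Sum>n<k. exp_disc_term lam \<beta> c n h\<bar> \<le> exp (c / lam) / lam"
    by auto
qed

lemma disc_fraction_mean_sums:
  fixes lam \<beta> c :: real
  assumes lam: "lam > 0" and \<beta>: "\<beta> > 0"
  shows "(\<lambda>n. 1 / lam * (- 1 / lam) ^ n / fact n * (c ^ (n + 1) / (real n + 1) - c ^ (n + 1) / (real n + 1 + \<beta>)))
    sums disc_fraction_mean \<beta> lam c"
proof -
  have "1 / lam * (- 1 / lam) ^ n / fact n * (c ^ (n + 1) / (real n + 1) - c ^ (n + 1) / (real n + 1 + \<beta>))
      = \<beta> / (\<beta> + 1) * (c / lam) * ((\<beta> + 1) / (\<beta> + 1 + n) * (- (c / lam)) ^ n / fact (Suc n))" for n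
  proof -
    have "(- (c / lam)) ^ n = (- 1 / lam) ^ n * c ^ n"
      by (simp add: power_mult_distrib[symmetric])
    then show ?thesis
      using lam \<beta> by (simp only:) (simp add: divide_simps, simp add: algebra_simps)
  qed
  moreover have "(\<lambda>n. \<beta> / (\<beta> + 1) * (c / lam) * ((\<beta> + 1) / (\<beta> + 1 + n) * (- (c / lam)) ^ n / fact (Suc n)))
      sums disc_fraction_mean \<beta> lam c"
    unfolding disc_fraction_mean_def by (intro sums_mult hypergeom_2F2_b1_sums) (use \<beta> in simp)
  ultimately show ?thesis
    by simp
qed

lemma has_integral_exponential_disc_fraction:
  fixes lam c \<beta> :: real
  assumes lam: "lam > 0" and c: "c \<ge> 0" and \<beta>: "\<beta> > 0"
  shows "((\<lambda>h. exponential_density (1 / lam) h * disc_fraction \<beta> c h)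
           has_integral disc_fraction_mean \<beta> lam c) UNIV"
proof (cases "c = 0")
  case True
  then have "disc_fraction \<beta> c h = 0" for h
    by (auto simp: disc_fraction_def)
  with True show ?thesis
    by (simp add: disc_fraction_mean_def)
next
  case False
  with c have c: "c > 0" by simp
  have "((\<lambda>h. \<Sum>n<k. exp_disc_term lam \<beta> c n h) has_integral
      (\<Sum>n<k. 1 / lam * (- 1 / lam) ^ n / fact n * (c ^ (n + 1) / (real n + 1) - c ^ (n + 1) / (real n + 1 + \<beta>))))
      {0..c}" for k
    unfolding exp_disc_term_def
    by (intro has_integral_sum finite_lessThan has_integral_mult_right has_integral_powr_diff c \<beta>)
  then have "((\<lambda>h. exponential_density (1 / lam) h * disc_fraction \<beta> c h) has_integral disc_fraction_mean \<beta> lam c) {0..c}"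
  proof (rule has_integral_dominated_convergence[where h = "\<lambda>_. exp (c / lam) / lam"])
    show "(\<lambda>_. exp (c / lam) / lam) integrable_on {0..c}"
      by (rule integrable_const_ivl)
    show "\<forall>h\<in>{0..c}. norm (\<Sum>n<k. exp_disc_term lam \<beta> c n h) \<le> exp (c / lam) / lam" for k
      using exp_disc_term_partial_sums(2)[OF lam c \<beta>] by simp
    show "\<forall>h\<in>{0..c}. (\<lambda>k. \<Sum>n<k. exp_disc_term lam \<beta> c n h)
        \<longlonglongrightarrow> exponential_density (1 / lam) h * disc_fraction \<beta> c h"
      using exp_disc_term_partial_sums(1)[OF lam c \<beta>] by simp
  qed (use disc_fraction_mean_sums[OF lam \<beta>] in \<open>simp add: sums_def\<close>)
  then show ?thesis
    by (rule has_integral_on_superset) (auto simp: disc_fraction_def)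
qed

lemma emeasure_annulus:
  fixes a b :: real
  assumes "0 \<le> a" "a \<le> b"
  shows "emeasure lborel {z::complex. a \<le> cmod z \<and> cmod z \<le> b} = ennreal (pi * (b\<^sup>2 - a\<^sup>2))"
proof -
  have "{z::complex. a \<le> cmod z \<and> cmod z \<le> b} = cball 0 b - ball 0 a"
    by (auto simp: dist_norm)
  moreover have "emeasure lborel (cball (0::complex) b - ball 0 a)
      = emeasure lborel (cball (0::complex) b) - emeasure lborel (ball (0::complex) a)"
    using assms emeasure_lborel_ball_finite[of "0::complex" a] by (intro emeasure_Diff) auto
  moreover have "emeasure lborel (cball (0::complex) b) = ennreal (pi * b\<^sup>2)"
    and "emeasure lborel (ball (0::complex) a) = ennreal (pi * a\<^sup>2)"
    using assms by (simp_all add: emeasure_cball emeasure_ball unit_ball_vol_2)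
  ultimately show ?thesis
    by (simp add: ennreal_minus right_diff_distrib)
qed

lemma emeasure_annulus_outside_circle:
  fixes a b s :: real
  assumes a: "0 \<le> a" "a \<le> b" and s: "0 \<le> s"
  shows "emeasure lborel {z::complex. a \<le> cmod z \<and> cmod z \<le> b \<and> s \<le> cmod z}
    = ennreal (pi * (max 0 (b\<^sup>2 - s\<^sup>2) - max 0 (a\<^sup>2 - s\<^sup>2)))"
proof (cases "s \<le> b")
  case True
  have "{z::complex. a \<le> cmod z \<and> cmod z \<le> b \<and> s \<le> cmod z} = {z. max a s \<le> cmod z \<and> cmod z \<le> b}"
    by auto
  also have "emeasure lborel \<dots> = ennreal (pi * (b\<^sup>2 - (max a s)\<^sup>2))"
    using a s True by (intro emeasure_annulus) auto
  finally have "emeasure lborel {z::complex. a \<le> cmod z \<and> cmod z \<le> b \<and> s \<le> cmod z}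
      = ennreal (pi * (b\<^sup>2 - (max a s)\<^sup>2))" .
  moreover have "b\<^sup>2 - (max a s)\<^sup>2 = max 0 (b\<^sup>2 - s\<^sup>2) - max 0 (a\<^sup>2 - s\<^sup>2)"
    using a s True power_mono[of a s 2] power_mono[of s a 2] power_mono[of s b 2] by (auto simp: max_def)
  ultimately show ?thesis
    by simp
next
  case False
  then have empty: "{z::complex. a \<le> cmod z \<and> cmod z \<le> b \<and> s \<le> cmod z} = {}"
    by auto
  have "a\<^sup>2 \<le> s\<^sup>2" "b\<^sup>2 \<le> s\<^sup>2"
    using a False by (auto intro: power_mono)
  then show ?thesis
    unfolding empty by simp
qed

lemma powr_le_powr_iff:
  fixes p u v :: real
  assumes "p > 0" "u \<ge> 0" "v \<ge> 0"
  shows "u powr p \<le> v powr p \<longleftrightarrow> u \<le> v"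
  using assms powr_mono2[of p u v] powr_less_mono2[of p v u] by (auto simp: not_le[symmetric])

lemma gain_sublevel_punctured:
  fixes \<alpha> h x :: real
  assumes \<alpha>: "\<alpha> > 0" and h: "h > 0" and x: "x > 0"
  shows "{z::complex. h * cmod z powr (- \<alpha>) \<le> x} - {0} = {z. (h / x) powr (1 / \<alpha>) \<le> cmod z}"
proof -
  have "h * r powr (- \<alpha>) \<le> x \<longleftrightarrow> (h / x) powr (1 / \<alpha>) \<le> r" if r: "r > 0" for r :: real
  proof -
    have "h * r powr (- \<alpha>) \<le> x \<longleftrightarrow> h / x \<le> r powr \<alpha>"
      using h x r by (simp add: powr_minus field_simps)
    also have "\<dots> \<longleftrightarrow> (h / x) powr (1 / \<alpha>) \<le> (r powr \<alpha>) powr (1 / \<alpha>)"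
      using \<alpha> h x by (intro powr_le_powr_iff[symmetric]) auto
    also have "(r powr \<alpha>) powr (1 / \<alpha>) = r"
      using \<alpha> r by (simp add: powr_powr)
    finally show ?thesis .
  qed
  moreover have "(h / x) powr (1 / \<alpha>) > 0"
    using h x by simp
  ultimately have "z \<noteq> 0 \<and> h * cmod z powr (- \<alpha>) \<le> x \<longleftrightarrow> (h / x) powr (1 / \<alpha>) \<le> cmod z" for z :: complex
    by (cases "z = 0") auto
  then show ?thesis
    by blast
qed

lemma gain_sublevel_nonpos:
  fixes \<alpha> h x :: real
  assumes "h > 0" and "x \<le> 0"
  shows "{z::complex. h * cmod z powr (- \<alpha>) \<le> x} \<subseteq> {0}"
proof
  fix z :: complex
  assume "z \<in> {z. h * cmod z powr (- \<alpha>) \<le> x}"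
  then have "\<not> 0 < h * cmod z powr (- \<alpha>)"
    using assms by simp
  then show "z \<in> {0}"
    using assms by (cases "z = 0") auto
qed

lemma sq_mul_disc_fraction:
  fixes \<alpha> r h x :: real
  assumes \<alpha>: "\<alpha> > 0" and r: "r \<ge> 0" and h: "h > 0" and x: "x > 0"
  shows "r\<^sup>2 * disc_fraction (2 / \<alpha>) (x * r powr \<alpha>) h = max 0 (r\<^sup>2 - (h / x) powr (2 / \<alpha>))"
proof (cases "r = 0")
  case True
  then show ?thesis
    using h by (simp add: disc_fraction_def)
next
  case False
  with r have r: "r > 0" by simp
  define c where "c = x * r powr \<alpha>"
  have c: "c > 0"
    using x r by (simp add: c_def)
  have "(h / x) powr (2 / \<alpha>) = (h / c) powr (2 / \<alpha>) * (r powr \<alpha>) powr (2 / \<alpha>)"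
    using x r by (simp add: c_def powr_mult[symmetric])
  also have "(r powr \<alpha>) powr (2 / \<alpha>) = r\<^sup>2"
    using \<alpha> r by (simp add: powr_powr)
  finally have diff: "r\<^sup>2 - (h / x) powr (2 / \<alpha>) = r\<^sup>2 * (1 - (h / c) powr (2 / \<alpha>))"
    by (simp add: algebra_simps)
  show ?thesis
  proof (cases "h \<le> c")
    case True
    then have "(h / c) powr (2 / \<alpha>) \<le> 1"
      using h c \<alpha> by (intro powr_le1) auto
    then show ?thesis
      using True h unfolding diff by (simp add: disc_fraction_def c_def)
  next
    case False
    then have "1 < (h / c) powr (2 / \<alpha>)"
      using c \<alpha> by (intro gr_one_powr) auto
    then show ?thesis
      using False r unfolding diff by (simp add: disc_fraction_def c_def mult_le_0_iff)
  qed
qed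

lemma sq_mul_disc_fraction_mono:
  fixes \<alpha> a b h x :: real
  assumes \<alpha>: "\<alpha> > 0" and ab: "0 \<le> a" "a \<le> b" and x: "x \<ge> 0"
  shows "a\<^sup>2 * disc_fraction (2 / \<alpha>) (x * a powr \<alpha>) h \<le> b\<^sup>2 * disc_fraction (2 / \<alpha>) (x * b powr \<alpha>) h"
proof (cases "h > 0 \<and> x > 0")
  case True
  have "a\<^sup>2 \<le> b\<^sup>2"
    using ab by (intro power_mono)
  then have "max 0 (a\<^sup>2 - (h / x) powr (2 / \<alpha>)) \<le> max 0 (b\<^sup>2 - (h / x) powr (2 / \<alpha>))"
    by (intro max.mono) auto
  then show ?thesis
    using True ab \<alpha> by (simp add: sq_mul_disc_fraction)
next
  case False
  then have "disc_fraction (2 / \<alpha>) (x * r powr \<alpha>) h = 0" for r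
    using x by (auto simp: disc_fraction_def)
  then show ?thesis
    by simp
qed

definition annulus_fraction :: "real \<Rightarrow> real \<Rightarrow> real \<Rightarrow> real \<Rightarrow> real \<Rightarrow> real" where
  "annulus_fraction \<alpha> a b x h =
     (b\<^sup>2 * disc_fraction (2 / \<alpha>) (x * b powr \<alpha>) h - a\<^sup>2 * disc_fraction (2 / \<alpha>) (x * a powr \<alpha>) h)
       / (b\<^sup>2 - a\<^sup>2)"

lemma annulus_fraction_nonneg:
  fixes \<alpha> a b h x :: real
  assumes "\<alpha> > 0" "0 \<le> a" "a < b" "x \<ge> 0"
  shows "0 \<le> annulus_fraction \<alpha> a b x h"
proof -
  have "a\<^sup>2 < b\<^sup>2"
    using assms power_strict_mono[of a b 2] by simp
  then show ?thesis
    using assms sq_mul_disc_fraction_mono[of \<alpha> a b x h] by (simp add: annulus_fraction_def)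
qed

lemma emeasure_uniform_annulus_gain_sublevel:
  fixes \<alpha> a b h x :: real
  assumes \<alpha>: "\<alpha> > 0" and ab: "0 \<le> a" "a < b" and h: "h > 0" and x: "x \<ge> 0"
  shows "emeasure (uniform_measure lborel {z::complex. a \<le> cmod z \<and> cmod z \<le> b}) {z. h * cmod z powr (- \<alpha>) \<le> x}
    = ennreal (annulus_fraction \<alpha> a b x h)"
proof -
  define A where "A = {z::complex. a \<le> cmod z \<and> cmod z \<le> b}"
  define T where "T = {z::complex. h * cmod z powr (- \<alpha>) \<le> x}"
  define V where
    "V = b\<^sup>2 * disc_fraction (2 / \<alpha>) (x * b powr \<alpha>) h - a\<^sup>2 * disc_fraction (2 / \<alpha>) (x * a powr \<alpha>) h"
  have sets: "A \<in> sets lborel" "T \<in> sets lborel"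
    unfolding A_def T_def by measurable
  have "emeasure lborel (A \<inter> T) = emeasure lborel (A \<inter> T - {0})"
    using sets by (intro emeasure_Diff_null_set[symmetric]) (auto intro: finite_imp_null_set_lborel)
  also have "\<dots> = ennreal (pi * V)"
  proof (cases "x = 0")
    case True
    then have empty: "A \<inter> T - {0} = {}"
      using gain_sublevel_nonpos[OF h, of x \<alpha>] unfolding T_def by auto
    have "disc_fraction (2 / \<alpha>) 0 h = 0"
      by (simp add: disc_fraction_def)
    then show ?thesis
      unfolding empty using True by (simp add: V_def)
  next
    case False
    with x have x: "x > 0" by simp
    define s where "s = (h / x) powr (1 / \<alpha>)"
    have punctured: "A \<inter> T - {0} = {z. a \<le> cmod z \<and> cmod z \<le> b \<and> s \<le> cmod z}"
      using gain_sublevel_punctured[OF \<alpha> h x] unfolding A_def T_def s_def by auto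
    have "s\<^sup>2 = s powr 2"
      using h x by (simp add: s_def)
    also have "\<dots> = (h / x) powr (2 / \<alpha>)"
      by (simp add: s_def powr_powr)
    finally have s_sq: "s\<^sup>2 = (h / x) powr (2 / \<alpha>)" .
    have "emeasure lborel (A \<inter> T - {0}) = ennreal (pi * (max 0 (b\<^sup>2 - s\<^sup>2) - max 0 (a\<^sup>2 - s\<^sup>2)))"
      unfolding punctured by (rule emeasure_annulus_outside_circle) (use ab in \<open>auto simp: s_def\<close>)
    also have "max 0 (b\<^sup>2 - s\<^sup>2) - max 0 (a\<^sup>2 - s\<^sup>2) = V"
      using ab \<alpha> h x by (simp add: s_sq V_def sq_mul_disc_fraction)
    finally show ?thesis .
  qed
  finally have area: "emeasure lborel (A \<inter> T) = ennreal (pi * V)" .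
  have "0 \<le> V / (b\<^sup>2 - a\<^sup>2)"
    using annulus_fraction_nonneg[OF \<alpha> ab x] by (simp add: annulus_fraction_def V_def)
  moreover have "0 < b\<^sup>2 - a\<^sup>2"
    using ab power_strict_mono[of a b 2] by simp
  moreover have "emeasure lborel A = ennreal (pi * (b\<^sup>2 - a\<^sup>2))"
    using ab unfolding A_def by (intro emeasure_annulus) auto
  ultimately have "emeasure (uniform_measure lborel A) T = ennreal (V / (b\<^sup>2 - a\<^sup>2))"
    using sets by (simp add: area divide_ennreal zero_le_divide_iff)
  then show ?thesis
    unfolding A_def T_def V_def annulus_fraction_def .
qed

lemma (in prob_space) emeasure_indep_pair:
  assumes XY: "indep_var N X K Y" and S: "S \<in> sets (N \<Otimes>\<^sub>M K)"
  shows "emeasure M {\<omega> \<in> space M. (X \<omega>, Y \<omega>) \<in> S}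
    = (\<integral>\<^sup>+x. emeasure (distr M K Y) (Pair x -` S) \<partial>distr M N X)"
proof -
  have Y: "random_variable K Y" and XY_rv: "random_variable (N \<Otimes>\<^sub>M K) (\<lambda>\<omega>. (X \<omega>, Y \<omega>))"
    and joint: "distr M N X \<Otimes>\<^sub>M distr M K Y = distr M (N \<Otimes>\<^sub>M K) (\<lambda>\<omega>. (X \<omega>, Y \<omega>))"
    using XY by (auto simp: indep_var_distribution_eq)
  interpret Y: prob_space "distr M K Y"
    using Y by (rule prob_space_distr)
  have "{\<omega> \<in> space M. (X \<omega>, Y \<omega>) \<in> S} = (\<lambda>\<omega>. (X \<omega>, Y \<omega>)) -` S \<inter> space M"
    by auto
  then have "emeasure M {\<omega> \<in> space M. (X \<omega>, Y \<omega>) \<in> S}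
      = emeasure (distr M (N \<Otimes>\<^sub>M K) (\<lambda>\<omega>. (X \<omega>, Y \<omega>))) S"
    using XY_rv S by (simp add: emeasure_distr)
  also have "\<dots> = emeasure (distr M N X \<Otimes>\<^sub>M distr M K Y) S"
    by (simp add: joint)
  also have "\<dots> = (\<integral>\<^sup>+x. emeasure (distr M K Y) (Pair x -` S) \<partial>distr M N X)"
    using S by (intro Y.emeasure_pair_measure_alt) simp
  finally show ?thesis .
qed

(* indep_var requires both variables to take values in one type, so fading_model states the
   independence of complex_of_real o H and Z. *)
lemma emeasure_gain_le:
  fixes M :: "'a measure"
  assumes model: "fading_model M lam H Z A"
  shows "emeasure M {\<omega> \<in> space M. gain \<alpha> H Z \<omega> \<le> x}
    = (\<integral>\<^sup>+h. ennreal (exponential_density (1 / lam) h)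
          * emeasure (uniform_measure lborel A) {z. h * cmod z powr (- \<alpha>) \<le> x} \<partial>lborel)"
proof -
  interpret prob_space M
    using model by (simp add: fading_model_def)
  have H: "distributed M lborel H (exponential_density (1 / lam))" and Z: "random_variable borel Z"
    and indep: "indep_var borel (\<lambda>\<omega>. complex_of_real (H \<omega>)) borel Z"
    and distr_Z: "distr M borel Z = uniform_measure lborel A"
    using model by (auto simp: fading_model_def cong: distr_cong)
  interpret Z: prob_space "distr M borel Z"
    using Z by (rule prob_space_distr)
  define S where "S = {p :: complex \<times> complex. Re (fst p) * cmod (snd p) powr (- \<alpha>) \<le> x}"
  define g where "g w = emeasure (distr M borel Z) (Pair w -` S)" for w
  have "{p \<in> space (borel \<Otimes>\<^sub>M borel). Re (fst p) * cmod (snd p) powr (- \<alpha>) \<le> x}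
      \<in> sets (borel \<Otimes>\<^sub>M (borel :: complex measure))"
    by measurable
  then have S: "S \<in> sets (borel \<Otimes>\<^sub>M borel)"
    by (simp add: S_def space_pair_measure)
  then have g: "g \<in> borel_measurable borel"
    unfolding g_def by (intro Z.measurable_emeasure_Pair) simp
  have "emeasure M {\<omega> \<in> space M. gain \<alpha> H Z \<omega> \<le> x}
      = emeasure M {\<omega> \<in> space M. (complex_of_real (H \<omega>), Z \<omega>) \<in> S}"
    by (simp add: S_def gain_def)
  also have "\<dots> = (\<integral>\<^sup>+w. g w \<partial>distr M borel (\<lambda>\<omega>. complex_of_real (H \<omega>)))"
    unfolding g_def using indep S by (rule emeasure_indep_pair)
  also have "distr M borel (\<lambda>\<omega>. complex_of_real (H \<omega>)) = distr (distr M borel H) borel complex_of_real"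
    using H by (subst distr_distr) (auto simp: distributed_def comp_def)
  also have "(\<integral>\<^sup>+w. g w \<partial>\<dots>) = (\<integral>\<^sup>+h. g (complex_of_real h) \<partial>distr M borel H)"
    using g by (intro nn_integral_distr) auto
  also have "distr M borel H = density lborel (exponential_density (1 / lam))"
    using H by (simp add: distributed_def cong: distr_cong)
  also have "(\<integral>\<^sup>+h. g (complex_of_real h) \<partial>\<dots>)
      = (\<integral>\<^sup>+h. ennreal (exponential_density (1 / lam) h) * g (complex_of_real h) \<partial>lborel)"
    using g by (intro nn_integral_density) auto
  finally show ?thesis
    by (simp add: g_def distr_Z S_def vimage_def)
qed

lemma emeasure_gain_le_annulus:
  fixes M :: "'a measure"
  assumes model: "fading_model M lam H Z {z. a \<le> cmod z \<and> cmod z \<le> b}"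
    and \<alpha>: "\<alpha> > 0" and ab: "0 \<le> a" "a < b" and x: "x \<ge> 0" and lam: "lam > 0"
  shows "emeasure M {\<omega> \<in> space M. gain \<alpha> H Z \<omega> \<le> x}
    = (\<integral>\<^sup>+h. ennreal (exponential_density (1 / lam) h * annulus_fraction \<alpha> a b x h) \<partial>lborel)"
  unfolding emeasure_gain_le[OF model]
proof (rule nn_integral_cong_AE)
  show "AE h in lborel. ennreal (exponential_density (1 / lam) h)
      * emeasure (uniform_measure lborel {z. a \<le> cmod z \<and> cmod z \<le> b}) {z. h * cmod z powr (- \<alpha>) \<le> x}
      = ennreal (exponential_density (1 / lam) h * annulus_fraction \<alpha> a b x h)"
    using AE_lborel_singleton[of 0]
  proof eventually_elim
    case (elim h)
    show ?case
    proof (cases "h > 0")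
      case True
      then show ?thesis
        using \<alpha> ab x lam
        by (simp only: emeasure_uniform_annulus_gain_sublevel) (simp add: ennreal_mult' exponential_density_nonneg)
    next
      case False
      with elim show ?thesis
        by (simp add: annulus_fraction_def exponential_density_def disc_fraction_def)
    qed
  qed
qed

lemma has_integral_exponential_annulus_fraction:
  fixes lam \<alpha> a b x :: real
  assumes lam: "lam > 0" and \<alpha>: "\<alpha> > 0" and ab: "0 \<le> a" "a < b" and x: "x \<ge> 0"
  shows "((\<lambda>h. exponential_density (1 / lam) h * annulus_fraction \<alpha> a b x h) has_integral
    (b\<^sup>2 * disc_fraction_mean (2 / \<alpha>) lam (x * b powr \<alpha>) - a\<^sup>2 * disc_fraction_mean (2 / \<alpha>) lam (x * a powr \<alpha>))
      / (b\<^sup>2 - a\<^sup>2)) UNIV"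
proof -
  have "((\<lambda>h. exponential_density (1 / lam) h * disc_fraction (2 / \<alpha>) (x * r powr \<alpha>) h)
      has_integral disc_fraction_mean (2 / \<alpha>) lam (x * r powr \<alpha>)) UNIV" if "r \<ge> 0" for r
    using lam \<alpha> x that by (intro has_integral_exponential_disc_fraction) auto
  then have "((\<lambda>h. (b\<^sup>2 * (exponential_density (1 / lam) h * disc_fraction (2 / \<alpha>) (x * b powr \<alpha>) h)
        - a\<^sup>2 * (exponential_density (1 / lam) h * disc_fraction (2 / \<alpha>) (x * a powr \<alpha>) h)) / (b\<^sup>2 - a\<^sup>2))
      has_integral (b\<^sup>2 * disc_fraction_mean (2 / \<alpha>) lam (x * b powr \<alpha>)
        - a\<^sup>2 * disc_fraction_mean (2 / \<alpha>) lam (x * a powr \<alpha>)) / (b\<^sup>2 - a\<^sup>2)) UNIV"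
    using ab by (intro has_integral_divide has_integral_diff has_integral_mult_right) auto
  then show ?thesis
    by (simp add: annulus_fraction_def right_diff_distrib mult_ac)
qed

lemma measure_gain_le_annulus:
  fixes M :: "'a measure"
  assumes model: "fading_model M lam H Z {z. a \<le> cmod z \<and> cmod z \<le> b}"
    and \<alpha>: "\<alpha> > 0" and ab: "0 \<le> a" "a < b" and x: "x \<ge> 0" and lam: "lam > 0"
  shows "measure M {\<omega> \<in> space M. gain \<alpha> H Z \<omega> \<le> x}
    = (b\<^sup>2 * disc_fraction_mean (2 / \<alpha>) lam (x * b powr \<alpha>) - a\<^sup>2 * disc_fraction_mean (2 / \<alpha>) lam (x * a powr \<alpha>))
        / (b\<^sup>2 - a\<^sup>2)"
    (is "_ = ?I")
proof -
  define G where "G h = exponential_density (1 / lam) h * annulus_fraction \<alpha> a b x h" for h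
  have G_nonneg: "0 \<le> G h" for h
    unfolding G_def using annulus_fraction_nonneg[OF \<alpha> ab x] lam
    by (simp add: exponential_density_nonneg)
  have G_integral: "(G has_integral ?I) UNIV"
    unfolding G_def using lam \<alpha> ab x by (rule has_integral_exponential_annulus_fraction)
  have "G \<in> borel_measurable borel"
    unfolding G_def annulus_fraction_def disc_fraction_def by measurable
  then have "emeasure M {\<omega> \<in> space M. gain \<alpha> H Z \<omega> \<le> x} = ennreal ?I"
    unfolding emeasure_gain_le_annulus[OF model \<alpha> ab x lam] G_def[symmetric]
    using G_nonneg G_integral by (rule nn_integral_has_integral_lborel)
  then show ?thesis
    using has_integral_nonneg[OF G_integral G_nonneg] by (simp add: measure_def)
qed

lemma disc_fraction_mean_radius:
  fixes \<alpha> lam r x :: real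
  assumes \<alpha>: "\<alpha> > 0" and lam: "lam > 0" and r: "r > 0"
  shows "disc_fraction_mean (2 / \<alpha>) lam (x * r powr \<alpha>)
    = 2 * lam powr (2 / \<alpha>) / (\<alpha> * r\<^sup>2) * (r powr \<alpha> / lam) powr (2 / \<alpha> + 1) / (2 / \<alpha> + 1) * x
        * hypergeom [2 / \<alpha> + 1, 1] [2 / \<alpha> + 1 + 1, 2] (- (r powr \<alpha> / lam) * x)"
proof -
  define \<beta> where "\<beta> = 2 / \<alpha>"
  have \<alpha>\<beta>: "\<alpha> * \<beta> = 2" "\<beta> > 0"
    using \<alpha> by (simp_all add: \<beta>_def)
  have "(r powr \<alpha> / lam) powr (\<beta> + 1) = r powr (\<alpha> * \<beta> + \<alpha>) / (lam powr \<beta> * lam)"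
    using r lam by (simp add: powr_divide powr_powr powr_add distrib_left)
  also have "\<alpha> * \<beta> + \<alpha> = 2 + \<alpha>"
    using \<alpha>\<beta> by simp
  also have "r powr (2 + \<alpha>) = r\<^sup>2 * r powr \<alpha>"
    using r by (simp add: powr_add)
  finally have power: "(r powr \<alpha> / lam) powr (\<beta> + 1) = r\<^sup>2 * r powr \<alpha> / (lam powr \<beta> * lam)" .
  have "2 * lam powr \<beta> / (\<alpha> * r\<^sup>2) * (r powr \<alpha> / lam) powr (\<beta> + 1) / (\<beta> + 1) * x
      = \<beta> / (\<beta> + 1) * (x * r powr \<alpha> / lam)"
    unfolding power using \<alpha> r lam by (simp add: \<beta>_def field_simps)
  then show ?thesis
    unfolding disc_fraction_mean_def \<beta>_def[symmetric] by (simp add: mult.commute)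
qed

theorem corollary1:
  fixes \<alpha> R1 R2 lamG :: real
  assumes "\<alpha> > 0" and "0 < R1" and "R1 < R2" and "lamG > 0"
  defines "b3 \<equiv> 2 / \<alpha> + 1"
      and "b11 \<equiv> 2 * lamG powr (2 / \<alpha>) / (\<alpha> * R1\<^sup>2)"
      and "b12 \<equiv> 2 * lamG powr (2 / \<alpha>) / (\<alpha> * (R2\<^sup>2 - R1\<^sup>2))"
      and "b21 \<equiv> R1 powr \<alpha> / lamG"
      and "b22 \<equiv> R2 powr \<alpha> / lamG"
  shows
    "(\<forall>(M :: 'a measure) H Z x.
        fading_model M lamG H Z {z. cmod z \<le> R1} \<and> 0 \<le> x \<longrightarrow>
        measure M {\<omega> \<in> space M. gain \<alpha> H Z \<omega> \<le> x}
          = b11 * b21 powr b3 / b3 * x * hypergeom [b3, 1] [b3 + 1, 2] (- b21 * x))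
     \<and>
     (\<forall>(M :: 'a measure) H Z x.
        fading_model M lamG H Z {z. R1 \<le> cmod z \<and> cmod z \<le> R2} \<and> 0 \<le> x \<longrightarrow>
        measure M {\<omega> \<in> space M. gain \<alpha> H Z \<omega> \<le> x}
          = b12 * b22 powr b3 / b3 * x * hypergeom [b3, 1] [b3 + 1, 2] (- b22 * x)
            - b12 * b21 powr b3 / b3 * x * hypergeom [b3, 1] [b3 + 1, 2] (- b21 * x))"
proof (intro conjI allI impI; elim conjE)
  fix M :: "'a measure" and H Z and x :: real
  assume "fading_model M lamG H Z {z. cmod z \<le> R1}" and x: "0 \<le> x"
  then have "fading_model M lamG H Z {z. 0 \<le> cmod z \<and> cmod z \<le> R1}"
    by simp
  then have "measure M {\<omega> \<in> space M. gain \<alpha> H Z \<omega> \<le> x}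
      = disc_fraction_mean (2 / \<alpha>) lamG (x * R1 powr \<alpha>)"
    using measure_gain_le_annulus[where a = 0] x assms(1,2,4) by simp
  then show "measure M {\<omega> \<in> space M. gain \<alpha> H Z \<omega> \<le> x}
      = b11 * b21 powr b3 / b3 * x * hypergeom [b3, 1] [b3 + 1, 2] (- b21 * x)"
    using assms(1,2,4) by (simp add: disc_fraction_mean_radius b11_def b21_def b3_def)
next
  fix M :: "'a measure" and H Z and x :: real
  assume "fading_model M lamG H Z {z. R1 \<le> cmod z \<and> cmod z \<le> R2}" and x: "0 \<le> x"
  then have "measure M {\<omega> \<in> space M. gain \<alpha> H Z \<omega> \<le> x}
      = (R2\<^sup>2 * disc_fraction_mean (2 / \<alpha>) lamG (x * R2 powr \<alpha>)
          - R1\<^sup>2 * disc_fraction_mean (2 / \<alpha>) lamG (x * R1 powr \<alpha>))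
          / (R2\<^sup>2 - R1\<^sup>2)"
    using assms(1-4) x by (intro measure_gain_le_annulus) auto
  then show "measure M {\<omega> \<in> space M. gain \<alpha> H Z \<omega> \<le> x}
      = b12 * b22 powr b3 / b3 * x * hypergeom [b3, 1] [b3 + 1, 2] (- b22 * x)
        - b12 * b21 powr b3 / b3 * x * hypergeom [b3, 1] [b3 + 1, 2] (- b21 * x)"
    using assms(1-4) by (simp add: disc_fraction_mean_radius b12_def b21_def b22_def b3_def diff_divide_distrib mult_ac)
qed

end
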